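(* Let $H=(V,E,C,\ell)$ be an edge-colored graph with $k$ colors, $x$ a feasible solution of the \textsc{MinECC} LP relaxation, $e=\{u,v\}\in E$ an edge with color $c=\ell(e)$ and $x_e=\max\{x_u^c,x_v^c\}$, and let $z_0\le z_1\le\dots\le z_{k-1}$ be the color thresholds of $e$. Then for every integer $t$ with $1\le t\le\frac k2$, $$t\le x_e+z_t+z_{t+1}+\cdots+z_{2t-1}.$$
   Context: The \textsc{MinECC} LP relaxation for an edge-colored hypergraph $H=(V,E,C,\ell)$ with colors $C=[k]$ has constraints $\sum_{i=1}^k x_v^i=k-1$ for all $v\in V$; $x_e\ge x_w^{\ell(e)}$ for all $e\in E$, $w\in e$; $0\le x_w^i\le 1$; $0\le x_e\le 1$. An edge-colored graph is one in which every edge has exactly two nodes. Color thresholds of an edge $e$ with color $c$: for $j\in C\setminus\{c\}$ let $m_j=\min_{w\in e}x_w^j$, and let $m_{(1)}\le m_{(2)}\le\dots\le m_{(k-1)}$ be these $k-1$ values sorted in nondecreasing order. Set $z_0=0$ and $z_i=m_{(i)}$ for $1\le i\le k-1$. Equivalently, $z_i$ is the smallest nonnegative value such that for every $\rho>z_i$ there are at least $i$ distinct colors $j\ne c$ for which some $w\in e$ has $x_w^j<\rho$. *)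

theory Defs
  imports Complex_Main
begin

(* Edges are abstract identifiers of type 'e; nodes e is the node set of edge e
   (this allows parallel edges).  x v i is the LP variable x_v^i, xe e is x_e. *)

definition edge_colored_hypergraph ::
  "'v set \<Rightarrow> 'e set \<Rightarrow> ('e \<Rightarrow> 'v set) \<Rightarrow> nat \<Rightarrow> ('e \<Rightarrow> nat) \<Rightarrow> bool" where
  "edge_colored_hypergraph V E nodes k l \<longleftrightarrow>
     finite V \<and> finite E \<and>
     (\<forall>e\<in>E. nodes e \<subseteq> V \<and> nodes e \<noteq> {} \<and> l e \<in> {1..k})"

definition edge_colored_graph ::
  "'v set \<Rightarrow> 'e set \<Rightarrow> ('e \<Rightarrow> 'v set) \<Rightarrow> nat \<Rightarrow> ('e \<Rightarrow> nat) \<Rightarrow> bool" where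
  "edge_colored_graph V E nodes k l \<longleftrightarrow>
     edge_colored_hypergraph V E nodes k l \<and> (\<forall>e\<in>E. card (nodes e) = 2)"

definition minecc_lp_feasible ::
  "'v set \<Rightarrow> 'e set \<Rightarrow> ('e \<Rightarrow> 'v set) \<Rightarrow> nat \<Rightarrow> ('e \<Rightarrow> nat)
     \<Rightarrow> ('v \<Rightarrow> nat \<Rightarrow> real) \<Rightarrow> ('e \<Rightarrow> real) \<Rightarrow> bool" where
  "minecc_lp_feasible V E nodes k l x xe \<longleftrightarrow>
     (\<forall>v\<in>V. (\<Sum>i=1..k. x v i) = real k - 1) \<and>
     (\<forall>e\<in>E. \<forall>w\<in>nodes e. xe e \<ge> x w (l e)) \<and>
     (\<forall>w\<in>V. \<forall>i\<in>{1..k}. 0 \<le> x w i \<and> x w i \<le> 1) \<and>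
     (\<forall>e\<in>E. 0 \<le> xe e \<and> xe e \<le> 1)"

definition color_min :: "('e \<Rightarrow> 'v set) \<Rightarrow> ('v \<Rightarrow> nat \<Rightarrow> real) \<Rightarrow> 'e \<Rightarrow> nat \<Rightarrow> real" where
  "color_min nodes x e j = Min ((\<lambda>w. x w j) ` nodes e)"

definition color_threshold ::
  "('e \<Rightarrow> 'v set) \<Rightarrow> nat \<Rightarrow> ('e \<Rightarrow> nat) \<Rightarrow> ('v \<Rightarrow> nat \<Rightarrow> real) \<Rightarrow> 'e \<Rightarrow> nat \<Rightarrow> real" where
  "color_threshold nodes k l x e i =
     (if i = 0 then 0
      else sort (map (color_min nodes x e) (filter (\<lambda>j. j \<noteq> l e) [1..<k+1])) ! (i - 1))"

end

theory Submission
  imports Defs "HOL-Library.Multiset"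
begin

text \<open>
  Enumerate the colours other than \<open>c = l e\<close> as \<open>j 1, \<dots>, j (k - 1)\<close> so that
  \<open>z i = min (x u (j i)) (x v (j i))\<close>.  Among the \<open>2t - 1\<close> colours \<open>j 1, \<dots>, j (2t - 1)\<close>
  one endpoint \<open>w\<close> of \<open>e\<close> attains the minimum for a set \<open>I\<close> of at least \<open>t\<close> of them.
  Since \<open>1 - z i\<close> is nonincreasing and nonnegative,
  \<open>t - (z t + \<dots> + z (2t - 1)) \<le> (\<Sum>i\<in>I. 1 - x w (j i)) \<le> (\<Sum>j'\<noteq>c. 1 - x w j') = x w c \<le> x\<^sub>e\<close>,
  where the equality is the LP constraint \<open>(\<Sum>j'. x w j') = k - 1\<close>.
\<close>

lemma sort_map_eq_map_sort_key: "sort (map f xs) = map f (sort_key f xs)"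
  by (rule properties_for_sort) auto

lemma sum_top_indices_le_sum_card_eq:
  fixes g :: "nat \<Rightarrow> 'a::linordered_idom"
  assumes antimono: "\<And>i j. m \<le> i \<Longrightarrow> i \<le> j \<Longrightarrow> j \<le> n \<Longrightarrow> g j \<le> g i"
    and I: "I \<subseteq> {m..n}" "card I = t"
  shows "(\<Sum>i=Suc n-t..n. g i) \<le> sum g I"
proof (cases "t = 0")
  case True
  then show ?thesis using I by (simp add: finite_subset)
next
  case False
  define R where "R = {Suc n-t..n}"
  have fin: "finite I" "finite R" using I(1) finite_subset unfolding R_def by auto
  have "t \<le> Suc n - m" using card_mono[OF _ I(1)] I(2) by simp
  then have "card R = t" and m_le: "m \<le> Suc n - t" and "Suc n - t \<le> n"
    using False unfolding R_def by auto
  then have card_diff: "card (R - I) = card (I - R)"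
    using I(2) fin by (simp add: card_Diff_subset_Int Int_commute)
  have "sum g (R - I) \<le> (\<Sum>i\<in>R - I. g (Suc n - t))"
    using m_le by (intro sum_mono) (auto simp: R_def intro: antimono)
  also have "\<dots> = (\<Sum>i\<in>I - R. g (Suc n - t))" using card_diff by simp
  also have "\<dots> \<le> sum g (I - R)"
    using I(1) \<open>Suc n - t \<le> n\<close> by (intro sum_mono antimono) (auto simp: R_def)
  finally have "sum g (R - I) \<le> sum g (I - R)" .
  moreover have "sum g R = sum g (R \<inter> I) + sum g (R - I)"
    using fin(2) by (rule sum.Int_Diff)
  moreover have "sum g I = sum g (R \<inter> I) + sum g (I - R)"
    using fin(1) by (metis sum.Int_Diff Int_commute)
  ultimately show ?thesis unfolding R_def by simp
qed

lemma sum_top_indices_le_sum: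
  fixes g :: "nat \<Rightarrow> 'a::linordered_idom"
  assumes antimono: "\<And>i j. m \<le> i \<Longrightarrow> i \<le> j \<Longrightarrow> j \<le> n \<Longrightarrow> g j \<le> g i"
    and nonneg: "\<And>i. m \<le> i \<Longrightarrow> i \<le> n \<Longrightarrow> 0 \<le> g i"
    and I: "I \<subseteq> {m..n}" "t \<le> card I"
  shows "(\<Sum>i=Suc n-t..n. g i) \<le> sum g I"
proof -
  obtain I' where I': "I' \<subseteq> I" "card I' = t"
    using obtain_subset_with_card_n[OF I(2)] by blast
  have "(\<Sum>i=Suc n-t..n. g i) \<le> sum g I'"
    using I I' by (intro sum_top_indices_le_sum_card_eq[OF antimono]) auto
  also have "\<dots> \<le> sum g I"
    using I I' nonneg by (intro sum_mono2) (auto intro: finite_subset)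
  finally show ?thesis .
qed

lemma obtain_majority_for_min:
  fixes f :: "'w \<Rightarrow> 'a \<Rightarrow> 'b::linorder"
  assumes "finite S" "card S = 2*t - 1" "1 \<le> t"
  obtains w I where "w \<in> {u, v}" "I \<subseteq> S" "t \<le> card I"
    "\<And>i. i \<in> I \<Longrightarrow> min (f u i) (f v i) = f w i"
proof -
  define If where "If = {i \<in> S. f u i \<le> f v i}"
  have "If \<subseteq> S" by (auto simp: If_def)
  then have "card If + card (S - If) = card S"
    using assms(1) by (simp add: card_Diff_subset card_mono finite_subset)
  then have "t \<le> card If \<or> t \<le> card (S - If)" using assms(2,3) by linarith
  then show thesis
  proof
    assume "t \<le> card If"
    then show thesis using that[of u If] by (auto simp: If_def)
  next
    assume "t \<le> card (S - If)"
    then show thesis using that[of v "S - If"] by (auto simp: If_def min_def)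
  qed
qed

lemma sum_one_minus_other_colors_le:
  fixes y :: "nat \<Rightarrow> real"
  assumes sum_eq: "(\<Sum>i=1..k. y i) = real k - 1"
    and le_one: "\<And>i. i \<in> {1..k} \<Longrightarrow> y i \<le> 1"
    and c: "c \<in> {1..k}"
    and col: "inj_on col I" "col ` I \<subseteq> {1..k} - {c}"
  shows "(\<Sum>i\<in>I. 1 - y (col i)) \<le> y c"
proof -
  have "(\<Sum>i\<in>I. 1 - y (col i)) = (\<Sum>j\<in>col ` I. 1 - y j)"
    using col(1) by (simp add: sum.reindex)
  also have "\<dots> \<le> (\<Sum>j\<in>{1..k} - {c}. 1 - y j)"
    using col(2) le_one by (intro sum_mono2) auto
  also have "\<dots> = (real k - 1) - ((\<Sum>i=1..k. y i) - y c)"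
    using c by (simp add: sum_subtractf sum_diff1)
  finally show ?thesis using sum_eq by simp
qed

lemma bij_betw_pred_atLeastAtMost: "bij_betw (\<lambda>i. i - 1) {1..n::nat} {..<n}"
  by (rule bij_betw_byWitness[where f' = Suc]) auto

lemma color_threshold_enumeration:
  assumes "l e \<in> {1..k}"
  obtains col where "bij_betw col {1..k-1} ({1..k} - {l e})"
    and "\<And>i. i \<in> {1..k-1} \<Longrightarrow> color_threshold nodes k l x e i = color_min nodes x e (col i)"
    and "\<And>i j. 1 \<le> i \<Longrightarrow> i \<le> j \<Longrightarrow> j \<le> k - 1 \<Longrightarrow>
           color_threshold nodes k l x e i \<le> color_threshold nodes k l x e j"
proof -
  define m where "m = color_min nodes x e"
  define L where "L = sort_key m (filter (\<lambda>j. j \<noteq> l e) [1..<k+1])"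
  have L: "distinct L" "set L = {1..k} - {l e}" unfolding L_def by auto
  then have len: "length L = k - 1" using assms by (simp flip: distinct_card)
  have sorted: "sorted (map m L)" by (simp add: L_def)
  have z: "color_threshold nodes k l x e i = map m L ! (i - 1)" if "1 \<le> i" for i
    using that by (simp add: color_threshold_def L_def m_def sort_map_eq_map_sort_key)
  show ?thesis
  proof
    show "bij_betw (\<lambda>i. L ! (i - 1)) {1..k-1} ({1..k} - {l e})"
      using bij_betw_trans[OF bij_betw_pred_atLeastAtMost bij_betw_nth[OF L(1)]] L len
      by (simp add: lessThan_atLeast0 comp_def)
    show "color_threshold nodes k l x e i = color_min nodes x e (L ! (i - 1))"
      if "i \<in> {1..k-1}" for i
    proof -
      have "i - 1 < length L" using that len by auto
      then show ?thesis using that by (simp add: z m_def)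
    qed
    show "color_threshold nodes k l x e i \<le> color_threshold nodes k l x e j"
      if "1 \<le> i" "i \<le> j" "j \<le> k - 1" for i j
      using that len sorted_nth_mono[OF sorted, of "i - 1" "j - 1"] by (simp add: z)
  qed
qed

theorem lemma3:
  fixes V :: "'v set" and E :: "'e set" and nodes :: "'e \<Rightarrow> 'v set"
    and k :: nat and l :: "'e \<Rightarrow> nat"
    and x :: "'v \<Rightarrow> nat \<Rightarrow> real" and xe :: "'e \<Rightarrow> real"
    and e :: 'e and u v :: 'v and t :: nat
  assumes "edge_colored_graph V E nodes k l"
    and "minecc_lp_feasible V E nodes k l x xe"
    and "e \<in> E" and "nodes e = {u, v}"
    and "xe e = max (x u (l e)) (x v (l e))"
    and "1 \<le> t" and "real t \<le> real k / 2"
  shows "real t \<le> xe e + (\<Sum>i=t..2*t-1. color_threshold nodes k l x e i)"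
proof -
  define c where "c = l e"
  define z where "z = color_threshold nodes k l x e"
  have c: "c \<in> {1..k}" and uv: "u \<in> V" "v \<in> V"
    using assms(1,3,4) unfolding edge_colored_graph_def edge_colored_hypergraph_def c_def by auto
  have sum_x: "\<And>w. w \<in> V \<Longrightarrow> (\<Sum>i=1..k. x w i) = real k - 1"
    and x_le_one: "\<And>w i. w \<in> V \<Longrightarrow> i \<in> {1..k} \<Longrightarrow> x w i \<le> 1"
    using assms(2) unfolding minecc_lp_feasible_def by auto
  obtain col where col: "bij_betw col {1..k-1} ({1..k} - {c})"
    and z_col: "\<And>i. i \<in> {1..k-1} \<Longrightarrow> z i = min (x u (col i)) (x v (col i))"
    and z_mono: "\<And>i j. 1 \<le> i \<Longrightarrow> i \<le> j \<Longrightarrow> j \<le> k - 1 \<Longrightarrow> z i \<le> z j"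
    using color_threshold_enumeration[of l e k nodes x] c assms(4)
    unfolding z_def c_def color_min_def by auto
  have n: "2*t - 1 \<le> k - 1" "Suc (2*t - 1) - t = t" using assms(6,7) by linarith+
  obtain w I where w: "w \<in> {u, v}" and I: "I \<subseteq> {1..2*t-1}" "t \<le> card I"
    and min_w: "\<And>i. i \<in> I \<Longrightarrow> min (x u (col i)) (x v (col i)) = x w (col i)"
    by (rule obtain_majority_for_min[of "{1..2*t-1}" t u v "\<lambda>w i. x w (col i)"])
      (use assms(6) in auto)
  have I_colors: "I \<subseteq> {1..k-1}" using I(1) n(1) by auto
  have z_le_one: "z i \<le> 1" if "i \<in> {1..k-1}" for i
    using z_col[OF that] x_le_one[OF uv(1)] bij_betwE[OF col] that by fastforce
  have "real t - (\<Sum>i=t..2*t-1. z i) = (\<Sum>i=t..2*t-1. 1 - z i)"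
    using assms(6) by (simp add: sum_subtractf)
  also have "\<dots> \<le> (\<Sum>i\<in>I. 1 - z i)"
    using sum_top_indices_le_sum[OF _ _ I, of "\<lambda>i. 1 - z i"] n z_mono z_le_one by simp
  also have "\<dots> = (\<Sum>i\<in>I. 1 - x w (col i))"
    using I_colors z_col min_w by (intro sum.cong) auto
  also have "\<dots> \<le> x w c"
    using w uv I_colors bij_betw_imp_inj_on[OF col] bij_betw_imp_surj_on[OF col]
    by (intro sum_one_minus_other_colors_le[OF sum_x x_le_one c]) (auto intro: inj_on_subset)
  also have "\<dots> \<le> xe e" using w assms(5) by (auto simp: c_def)
  finally show ?thesis by (simp add: z_def)
qed

end
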